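(* Let $\mathcal X$ be finite with $N=|\mathcal X|\ge2$, $c\in(0,1/N]$, $\varepsilon\ge0$, and let $K\in\mathcal M(\varepsilon,c)$. Then for all $P_X,Q_X\in\mathcal Q_{\mathcal X}(c)$ with $\mathrm{TV}(P_X\|Q_X)\le\delta$, $$H^2(K\circ P_X\|K\circ Q_X)\le\Xi(\varepsilon,c)\left(2-\frac{4}{\sqrt{(1-Nc)e^\varepsilon+1}+1}\right)\delta,$$ where $\Xi(\varepsilon,c)=\min\left\{\frac{e^\varepsilon-1}{e^\varepsilon(1-Nc)+1},1\right\}$.
   Context: $H^2(P\|Q)=\sum_y Q(y)\big(1-\sqrt{P(y)/Q(y)}\big)^2$ is the squared Hellinger divergence (the $f$-divergence with $f(t)=(1-\sqrt t)^2$), and $\mathrm{TV}(P\|Q)=\frac12\sum|P-Q|$. A kernel $K$ is a row-stochastic matrix with entries $K_{Y|X=x}(y)$, $(K\circ P_X)(y)=\sum_xK_{Y|X=x}(y)P_X(x)$. PML: $\ell_{K\times P_X}(X\to y)=\log\frac{\max_x K_{Y|X=x}(y)}{(K\circ P_X)(y)}$ for full-support $P_X$ and $(K\circ P_X)(y)>0$. $\mathcal Q_{\mathcal X}(c)=\{P_X:\min_xP_X(x)\ge c\}$; $C(K,\mathcal P)=\sup_{P_X\in\mathcal P}\sup_{y:(K\circ P_X)(y)>0}\ell_{K\times P_X}(X\to y)$; $\mathcal M(\varepsilon,c)$ is the set of kernels from $\mathcal X$ to a finite output set with $C(K,\mathcal Q_{\mathcal X}(c))\le\varepsilon$. *)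

theory Defs
  imports Complex_Main
begin

definition is_dist :: "('a::finite \<Rightarrow> real) \<Rightarrow> bool" where
  "is_dist P \<longleftrightarrow> (\<forall>a. P a \<ge> 0) \<and> (\<Sum>a\<in>UNIV. P a) = 1"

text \<open>Kernel (row-stochastic matrix): K x y = K_{Y|X=x}(y).\<close>
definition is_kernel :: "('x::finite \<Rightarrow> 'y::finite \<Rightarrow> real) \<Rightarrow> bool" where
  "is_kernel K \<longleftrightarrow> (\<forall>x y. K x y \<ge> 0) \<and> (\<forall>x. (\<Sum>y\<in>UNIV. K x y) = 1)"

definition push :: "('x::finite \<Rightarrow> 'y::finite \<Rightarrow> real) \<Rightarrow> ('x \<Rightarrow> real) \<Rightarrow> 'y \<Rightarrow> real" where
  "push K P y = (\<Sum>x\<in>UNIV. K x y * P x)"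

definition PML :: "('x::finite \<Rightarrow> 'y::finite \<Rightarrow> real) \<Rightarrow> ('x \<Rightarrow> real) \<Rightarrow> 'y \<Rightarrow> real" where
  "PML K P y = ln (Max (range (\<lambda>x. K x y)) / push K P y)"

definition Qset :: "real \<Rightarrow> ('x::finite \<Rightarrow> real) set" where
  "Qset c = {P. is_dist P \<and> Min (range P) \<ge> c}"

text \<open>M(eps,c): kernels K with C(K, Q(c)) <= eps, where C is the supremum of PML over
  P in Q(c) and y with (K o P)(y) > 0; "sup <= eps" is written as "every value <= eps".\<close>
definition Mset :: "real \<Rightarrow> real \<Rightarrow> ('x::finite \<Rightarrow> 'y::finite \<Rightarrow> real) set" where
  "Mset eps c = {K. is_kernel K \<and>
     (\<forall>P\<in>Qset c. \<forall>y. push K P y > 0 \<longrightarrow> PML K P y \<le> eps)}"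

text \<open>Squared Hellinger divergence as an f-divergence, f(t) = (1 - sqrt t)^2, with the
  standard convention 0 f(p/0) = p * lim_{t\<rightarrow>\<infinity>} f(t)/t = p.\<close>
definition hellinger2 :: "('y::finite \<Rightarrow> real) \<Rightarrow> ('y \<Rightarrow> real) \<Rightarrow> real" where
  "hellinger2 P Q = (\<Sum>y\<in>UNIV. if Q y > 0 then Q y * (1 - sqrt (P y / Q y))^2 else P y)"

definition TV :: "('a::finite \<Rightarrow> real) \<Rightarrow> ('a \<Rightarrow> real) \<Rightarrow> real" where
  "TV P Q = (1/2) * (\<Sum>a\<in>UNIV. \<bar>P a - Q a\<bar>)"

definition Xi :: "real \<Rightarrow> real \<Rightarrow> nat \<Rightarrow> real" where
  "Xi eps c N = min ((exp eps - 1) / (exp eps * (1 - real N * c) + 1)) 1"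

end

theory Submission
  imports Defs
begin

text \<open>Testing the leakage bound against the distributions of \<open>Q(c)\<close> that place all of their
  free mass \<open>1 - N c\<close> on a single input shows that every row of \<open>K\<close> is dominated by
  \<open>e\<^sup>\<epsilon>\<close> times such a mixture. This yields the Dobrushin-type contraction
  \<open>TV(K\<circ>P, K\<circ>Q) \<le> \<Xi>(\<epsilon>,c) TV(P,Q)\<close> and the likelihood-ratio bound
  \<open>(K\<circ>P)/(K\<circ>Q) \<in> [1/R, R]\<close> with \<open>R = (1 - N c) e\<^sup>\<epsilon> + 1\<close>. For masses whose ratio lies
  in \<open>[1/R, R]\<close> the Hellinger integrand \<open>(\<surd>p - \<surd>q)\<^sup>2\<close> is at most
  \<open>(\<surd>R - 1)/(\<surd>R + 1) |p - q|\<close>, and the two bounds combine.\<close>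

lemma sum_UNIV_split_Compl:
  fixes f :: "'a::finite \<Rightarrow> 'b::comm_monoid_add"
  shows "sum f UNIV = sum f A + sum f (- A)"
  using sum.subset_diff[of A UNIV f] by (simp add: Compl_eq_Diff_UNIV add.commute)

lemma TV_commute: "TV P Q = TV Q P"
  unfolding TV_def by (simp add: abs_minus_commute)

lemma Qset_is_dist: "P \<in> Qset c \<Longrightarrow> is_dist P"
  by (simp add: Qset_def)

lemma Qset_le: "P \<in> Qset c \<Longrightarrow> c \<le> P x"
  unfolding Qset_def by (auto intro: order_trans[OF _ Min_le])

lemma Qset_nonneg: "P \<in> Qset c \<Longrightarrow> 0 \<le> c \<Longrightarrow> 0 \<le> P x"
  using Qset_le order_trans by blast

lemma Mset_is_kernel: "K \<in> Mset eps c \<Longrightarrow> is_kernel K"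
  by (simp add: Mset_def)

lemma push_nonneg:
  assumes "is_kernel K" "\<And>x. 0 \<le> P x"
  shows "0 \<le> push K P y"
  using assms unfolding push_def is_kernel_def by (auto intro!: sum_nonneg)

lemma push_diff: "push K P y - push K Q y = (\<Sum>x\<in>UNIV. K x y * (P x - Q x))"
  unfolding push_def by (simp add: sum_subtractf right_diff_distrib)

lemma Mset_kernel_le_push:
  assumes K: "K \<in> Mset eps c" and Q: "Q \<in> Qset c" and "0 < c"
  shows "K x y \<le> exp eps * push K Q y"
proof -
  have kern: "is_kernel K" using K by (rule Mset_is_kernel)
  have Q_nonneg: "0 \<le> Q x'" for x' using Q \<open>0 < c\<close> by (simp add: Qset_nonneg)
  have "K x y * c \<le> K x y * Q x"
    using kern Qset_le[OF Q] by (intro mult_left_mono) (auto simp: is_kernel_def)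
  also have "\<dots> \<le> push K Q y"
    unfolding push_def using kern Q_nonneg
    by (intro member_le_sum) (auto simp: is_kernel_def)
  finally have single: "K x y * c \<le> push K Q y" .
  show ?thesis
  proof (cases "push K Q y > 0")
    case False
    then have "K x y \<le> 0" using single \<open>0 < c\<close> by (smt (verit) mult_pos_pos)
    moreover have "0 \<le> push K Q y" using kern Q_nonneg by (rule push_nonneg)
    ultimately show ?thesis by (smt (verit) exp_gt_zero mult_nonneg_nonneg)
  next
    case True
    define M where "M = Max (range (\<lambda>x. K x y))"
    have "K x y \<le> M" unfolding M_def by (rule Max_ge) auto
    moreover have "M \<le> exp eps * push K Q y"
    proof (cases "M > 0")
      case True
      have "ln (M / push K Q y) \<le> ln (exp eps)"
        using K Q \<open>push K Q y > 0\<close> by (auto simp: Mset_def PML_def M_def)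
      then have "M / push K Q y \<le> exp eps"
        using ln_le_cancel_iff[OF divide_pos_pos[OF True \<open>push K Q y > 0\<close>] exp_gt_zero] by blast
      then show ?thesis using \<open>push K Q y > 0\<close> by (simp add: divide_le_eq)
    qed (use \<open>push K Q y > 0\<close> in \<open>smt (verit) exp_gt_zero mult_pos_pos\<close>)
    ultimately show ?thesis by linarith
  qed
qed

lemma point_mixture_in_Qset:
  fixes z :: "'x::finite"
  assumes "0 \<le> c" "real (card (UNIV :: 'x set)) * c \<le> 1"
  shows "(\<lambda>x. c + (if x = z then 1 - real (card (UNIV :: 'x set)) * c else 0)) \<in> Qset c"
  unfolding Qset_def is_dist_def using assms
  by (auto simp: sum.distrib Min_ge_iff)

lemma push_point_mixture:
  "push K (\<lambda>x. c + (if x = z then a else 0)) y = c * (\<Sum>x\<in>UNIV. K x y) + a * K z y"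
proof -
  have "K x y * (c + (if x = z then a else 0)) = c * K x y + (if x = z then a * K z y else 0)" for x
    by (simp add: algebra_simps)
  then show ?thesis unfolding push_def by (simp add: sum.distrib sum_distrib_left)
qed

lemma Mset_kernel_le_mixture:
  fixes K :: "'x::finite \<Rightarrow> 'y::finite \<Rightarrow> real"
  assumes "K \<in> Mset eps c" "0 < c" "real (card (UNIV :: 'x set)) * c \<le> 1"
  shows "K x y \<le> exp eps * (c * (\<Sum>x'\<in>UNIV. K x' y) + (1 - real (card (UNIV :: 'x set)) * c) * K z y)"
  using Mset_kernel_le_push[OF assms(1) point_mixture_in_Qset[of c z] assms(2)] assms(2,3)
  by (simp add: push_point_mixture)

lemma Mset_kernel_set_diff_le:
  fixes K :: "'x::finite \<Rightarrow> 'y::finite \<Rightarrow> real"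
  assumes K: "K \<in> Mset eps c" and "0 < c" "real (card (UNIV :: 'x set)) * c \<le> 1"
  shows "(\<Sum>y\<in>A. K x y) - (\<Sum>y\<in>A. K x' y)
     \<le> (exp eps - 1) / (exp eps * (1 - real (card (UNIV :: 'x set)) * c) + 1)"
proof -
  define N where "N = real (card (UNIV :: 'x set))"
  define a where "a = 1 - N * c"
  define E where "E = exp eps"
  define S where "S y = (\<Sum>x\<in>UNIV. K x y)" for y
  define u where "u = (\<Sum>y\<in>A. K x y)"
  define w where "w = (\<Sum>y\<in>A. K x' y)"
  have kern: "is_kernel K" using K by (rule Mset_is_kernel)
  have row: "K x y \<le> E * (c * S y + a * K z y)" for x y z
    using Mset_kernel_le_mixture[OF assms] by (simp add: E_def S_def a_def N_def)
  have "u \<le> (\<Sum>y\<in>A. E * c * S y + E * a * K x' y)"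
    unfolding u_def using row by (intro sum_mono) (simp add: algebra_simps)
  then have on_A: "u \<le> E * c * sum S A + E * a * w"
    by (simp only: w_def sum.distrib flip: sum_distrib_left)
  have row_sum: "(\<Sum>y\<in>-A. K x y) = 1 - (\<Sum>y\<in>A. K x y)" for x
    using sum_UNIV_split_Compl[of "K x" A] kern by (simp add: is_kernel_def)
  have "1 - w \<le> (\<Sum>y\<in>-A. E * c * S y + E * a * K x y)"
    unfolding w_def row_sum[symmetric] using row by (intro sum_mono) (simp add: algebra_simps)
  then have on_Compl: "1 - w \<le> E * c * sum S (-A) + E * a * (1 - u)"
    by (simp only: u_def row_sum sum.distrib flip: sum_distrib_left)
  have "sum S UNIV = N"
    unfolding S_def N_def using kern by (subst sum.swap) (simp add: is_kernel_def)
  then have "sum S A + sum S (-A) = N" using sum_UNIV_split_Compl[of S A] by simp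
  moreover have "u + (1 - w) \<le> E * (c * (sum S A + sum S (-A)) + a * (1 - u + w))"
    using on_A on_Compl by (simp add: algebra_simps)
  ultimately have "u + (1 - w) \<le> E * (c * N + a * (1 - u + w))" by simp
  also have "c * N + a * (1 - u + w) = 1 - a * (u - w)" by (simp add: a_def algebra_simps)
  finally have "(u - w) * (E * a + 1) \<le> E - 1" by (simp add: algebra_simps)
  moreover have "0 < E * a + 1"
    using assms(3) by (simp add: E_def a_def N_def add_nonneg_pos)
  ultimately show ?thesis by (simp add: u_def w_def E_def a_def N_def pos_le_divide_eq mult.commute)
qed

lemma sum_weighted_diff_le_TV:
  fixes f P Q :: "'a::finite \<Rightarrow> real"
  assumes mass: "sum P UNIV = sum Q UNIV" and osc: "\<And>x x'. f x - f x' \<le> \<eta>"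
  shows "(\<Sum>x\<in>UNIV. f x * (P x - Q x)) \<le> \<eta> * TV P Q"
proof -
  define m where "m = Min (range f)"
  have "m \<in> range f" unfolding m_def by (rule Min_in) auto
  then obtain x0 where x0: "f x0 = m" by auto
  have m_le: "m \<le> f x" for x unfolding m_def by (rule Min_le) auto
  have balance: "(\<Sum>x\<in>UNIV. P x - Q x) = 0" using mass by (simp add: sum_subtractf)
  have "(\<Sum>x\<in>UNIV. f x * (P x - Q x))
      = (\<Sum>x\<in>UNIV. (f x - m) * (P x - Q x)) + m * (\<Sum>x\<in>UNIV. P x - Q x)"
    by (simp add: sum_distrib_left left_diff_distrib right_diff_distrib sum_subtractf)
  also have "\<dots> = (\<Sum>x\<in>UNIV. (f x - m) * (P x - Q x))" using balance by simp
  also have "\<dots> \<le> (\<Sum>x\<in>UNIV. \<eta> * ((P x - Q x + \<bar>P x - Q x\<bar>) / 2))"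
  proof (rule sum_mono)
    fix x
    have "(f x - m) * (P x - Q x) \<le> (f x - m) * ((P x - Q x + \<bar>P x - Q x\<bar>) / 2)"
      using m_le[of x] by (intro mult_left_mono) auto
    also have "\<dots> \<le> \<eta> * ((P x - Q x + \<bar>P x - Q x\<bar>) / 2)"
      using osc[of x x0] x0 by (intro mult_right_mono) auto
    finally show "(f x - m) * (P x - Q x) \<le> \<eta> * ((P x - Q x + \<bar>P x - Q x\<bar>) / 2)" .
  qed
  also have "\<dots> = \<eta> / 2 * (\<Sum>x\<in>UNIV. P x - Q x) + \<eta> / 2 * (\<Sum>x\<in>UNIV. \<bar>P x - Q x\<bar>)"
    by (simp add: sum_distrib_left sum.distrib add_divide_distrib distrib_left)
  also have "\<dots> = \<eta> * TV P Q" using balance by (simp add: TV_def)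
  finally show ?thesis .
qed

lemma Mset_push_set_diff_le:
  fixes K :: "'x::finite \<Rightarrow> 'y::finite \<Rightarrow> real"
  assumes K: "K \<in> Mset eps c" and "0 < c" "real (card (UNIV :: 'x set)) * c \<le> 1"
    and P: "P \<in> Qset c" and Q: "Q \<in> Qset c"
  shows "(\<Sum>y\<in>A. push K P y) - (\<Sum>y\<in>A. push K Q y) \<le> Xi eps c (card (UNIV :: 'x set)) * TV P Q"
proof -
  have kern: "is_kernel K" using K by (rule Mset_is_kernel)
  define f where "f x = (\<Sum>y\<in>A. K x y)" for x
  have f_bounds: "0 \<le> f x" "f x \<le> 1" for x
    using kern sum_mono2[of UNIV A "K x"] unfolding f_def is_kernel_def
    by (auto intro: sum_nonneg)
  have "(\<Sum>y\<in>A. push K P y) - (\<Sum>y\<in>A. push K Q y) = (\<Sum>x\<in>UNIV. f x * (P x - Q x))"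
    unfolding f_def sum_subtractf[symmetric] push_diff
    by (subst sum.swap) (simp add: sum_distrib_right)
  also have "\<dots> \<le> Xi eps c (card (UNIV :: 'x set)) * TV P Q"
  proof (rule sum_weighted_diff_le_TV)
    show "sum P UNIV = sum Q UNIV"
      using Qset_is_dist[OF P] Qset_is_dist[OF Q] by (simp add: is_dist_def)
    fix x x'
    show "f x - f x' \<le> Xi eps c (card (UNIV :: 'x set))"
      unfolding Xi_def using Mset_kernel_set_diff_le[OF assms(1-3), where A = A and x = x and x' = x'] f_bounds[of x] f_bounds[of x']
      by (simp add: f_def)
  qed
  finally show ?thesis .
qed

lemma Mset_TV_push_le:
  fixes K :: "'x::finite \<Rightarrow> 'y::finite \<Rightarrow> real"
  assumes "K \<in> Mset eps c" "0 < c" "real (card (UNIV :: 'x set)) * c \<le> 1"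
    and "P \<in> Qset c" "Q \<in> Qset c"
  shows "TV (push K P) (push K Q) \<le> Xi eps c (card (UNIV :: 'x set)) * TV P Q"
proof -
  define A where "A = {y. push K Q y \<le> push K P y}"
  have "2 * TV (push K P) (push K Q)
      = (\<Sum>y\<in>A. \<bar>push K P y - push K Q y\<bar>) + (\<Sum>y\<in>-A. \<bar>push K P y - push K Q y\<bar>)"
    unfolding TV_def by (simp add: sum_UNIV_split_Compl[of _ A])
  also have "\<dots> = ((\<Sum>y\<in>A. push K P y) - (\<Sum>y\<in>A. push K Q y))
      + ((\<Sum>y\<in>-A. push K Q y) - (\<Sum>y\<in>-A. push K P y))"
    unfolding sum_subtractf[symmetric] by (intro arg_cong2[where f = "(+)"] sum.cong) (auto simp: A_def)
  also have "\<dots> \<le> Xi eps c (card (UNIV :: 'x set)) * TV P Q + Xi eps c (card (UNIV :: 'x set)) * TV Q P"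
    using Mset_push_set_diff_le[OF assms(1-5), of A] Mset_push_set_diff_le[OF assms(1-3,5,4), of "-A"]
    by (rule add_mono)
  finally show ?thesis by (simp add: TV_commute[of Q] mult.commute)
qed

lemma Mset_push_le_ratio:
  fixes K :: "'x::finite \<Rightarrow> 'y::finite \<Rightarrow> real"
  assumes K: "K \<in> Mset eps c" and "0 < c" and P: "P \<in> Qset c" and Q: "Q \<in> Qset c"
  shows "push K P y \<le> ((1 - real (card (UNIV :: 'x set)) * c) * exp eps + 1) * push K Q y"
proof -
  have kern: "is_kernel K" using K by (rule Mset_is_kernel)
  have "push K P y - push K Q y \<le> (\<Sum>x\<in>UNIV. exp eps * push K Q y * (P x - c))"
    unfolding push_diff
  proof (rule sum_mono)
    fix x
    have "K x y * (P x - Q x) \<le> K x y * (P x - c)"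
      using kern Qset_le[OF Q] by (intro mult_left_mono) (auto simp: is_kernel_def)
    also have "\<dots> \<le> exp eps * push K Q y * (P x - c)"
      using Mset_kernel_le_push[OF K Q \<open>0 < c\<close>] Qset_le[OF P] by (intro mult_right_mono) auto
    finally show "K x y * (P x - Q x) \<le> exp eps * push K Q y * (P x - c)" .
  qed
  also have "\<dots> = exp eps * push K Q y * (1 - real (card (UNIV :: 'x set)) * c)"
    using Qset_is_dist[OF P]
    by (simp add: sum_distrib_left[symmetric] sum_subtractf is_dist_def)
  finally show ?thesis by (simp add: algebra_simps)
qed

lemma hellinger2_eq_sum_sqrt_diff:
  assumes "\<And>y. 0 \<le> P y" "\<And>y. 0 \<le> Q y"
  shows "hellinger2 P Q = (\<Sum>y\<in>UNIV. (sqrt (P y) - sqrt (Q y))\<^sup>2)"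
  unfolding hellinger2_def
proof (rule sum.cong)
  fix y
  show "(if Q y > 0 then Q y * (1 - sqrt (P y / Q y))\<^sup>2 else P y) = (sqrt (P y) - sqrt (Q y))\<^sup>2"
  proof (cases "Q y > 0")
    case True
    have "Q y * (1 - sqrt (P y / Q y))\<^sup>2 = (sqrt (Q y) * (1 - sqrt (P y) / sqrt (Q y)))\<^sup>2"
      using True by (simp add: real_sqrt_divide power_mult_distrib)
    also have "sqrt (Q y) * (1 - sqrt (P y) / sqrt (Q y)) = sqrt (Q y) - sqrt (P y)"
      using True by (simp add: field_simps)
    finally show ?thesis using True by (simp add: power2_commute)
  next
    case False
    then show ?thesis using assms[of y] by simp
  qed
qed simp

lemma sqrt_diff_square_le:
  fixes p q R :: real
  assumes "0 \<le> p" "0 \<le> q" "p \<le> R * q" "q \<le> R * p" "1 \<le> R"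
  shows "(sqrt p - sqrt q)\<^sup>2 \<le> \<bar>p - q\<bar> * ((sqrt R - 1) / (sqrt R + 1))"
proof -
  define g where "g = (sqrt R - 1) / (sqrt R + 1)"
  have ordered: "(sqrt p - sqrt q)\<^sup>2 \<le> (p - q) * g" if "0 \<le> q" "q \<le> p" "p \<le> R * q" for p q
  proof -
    have "sqrt p \<le> sqrt R * sqrt q" using that by (simp flip: real_sqrt_mult)
    then have "(sqrt p - sqrt q) * (sqrt R + 1) \<le> (sqrt p + sqrt q) * (sqrt R - 1)"
      by (simp add: algebra_simps)
    moreover have "0 < sqrt R + 1" using \<open>1 \<le> R\<close> by (simp add: add_nonneg_pos)
    ultimately have "sqrt p - sqrt q \<le> (sqrt p + sqrt q) * g"
      unfolding g_def by (simp add: pos_le_divide_eq mult.assoc[symmetric])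
    then have "(sqrt p - sqrt q) * (sqrt p - sqrt q) \<le> (sqrt p - sqrt q) * ((sqrt p + sqrt q) * g)"
      using that by (intro mult_left_mono) auto
    also have "\<dots> = ((sqrt p - sqrt q) * (sqrt p + sqrt q)) * g" by (simp only: mult.assoc)
    also have "(sqrt p - sqrt q) * (sqrt p + sqrt q) = p - q"
      using that by (simp add: algebra_simps)
    finally show ?thesis by (simp only: power2_eq_square)
  qed
  show ?thesis
  proof (cases "q \<le> p")
    case True
    then show ?thesis using ordered assms unfolding g_def by simp
  next
    case False
    then show ?thesis using ordered[of p q] assms unfolding g_def by (simp add: power2_commute)
  qed
qed

lemma hellinger2_le_TV:
  assumes "\<And>y. 0 \<le> P y" "\<And>y. 0 \<le> Q y"
    and "\<And>y. P y \<le> R * Q y" "\<And>y. Q y \<le> R * P y" and "1 \<le> R"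
  shows "hellinger2 P Q \<le> (2 - 4 / (sqrt R + 1)) * TV P Q"
proof -
  define g where "g = (sqrt R - 1) / (sqrt R + 1)"
  have "hellinger2 P Q = (\<Sum>y\<in>UNIV. (sqrt (P y) - sqrt (Q y))\<^sup>2)"
    using assms(1,2) by (rule hellinger2_eq_sum_sqrt_diff)
  also have "\<dots> \<le> (\<Sum>y\<in>UNIV. \<bar>P y - Q y\<bar> * g)"
    unfolding g_def using assms by (intro sum_mono sqrt_diff_square_le)
  also have "\<dots> = 2 * g * TV P Q"
    by (simp add: TV_def sum_distrib_left mult.commute)
  also have "2 * g = 2 - 4 / (sqrt R + 1)"
  proof -
    have "0 < sqrt R + 1" using \<open>1 \<le> R\<close> by (simp add: add_nonneg_pos)
    then show ?thesis by (simp add: g_def field_simps)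
  qed
  finally show ?thesis .
qed

lemma Xi_nonneg:
  assumes "0 \<le> eps" "real N * c \<le> 1"
  shows "0 \<le> Xi eps c N"
  using assms unfolding Xi_def by (simp add: add_nonneg_pos)

theorem corollary2:
  fixes K :: "'x::finite \<Rightarrow> 'y::finite \<Rightarrow> real"
    and P Q :: "'x \<Rightarrow> real"
    and c eps \<delta> :: real
  assumes "(card (UNIV :: 'x set)) \<ge> 2"
    and "0 < c" and "c \<le> 1 / real (card (UNIV :: 'x set))"
    and "eps \<ge> 0"
    and "K \<in> Mset eps c"
    and "P \<in> Qset c" and "Q \<in> Qset c"
    and "TV P Q \<le> \<delta>"
  shows "hellinger2 (push K P) (push K Q)
     \<le> Xi eps c (card (UNIV :: 'x set))
       * (2 - 4 / (sqrt ((1 - real (card (UNIV :: 'x set)) * c) * exp eps + 1) + 1)) * \<delta>"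
proof -
  define N where "N = card (UNIV :: 'x set)"
  define R where "R = (1 - real N * c) * exp eps + 1"
  have Nc: "real N * c \<le> 1" using assms(1,3) by (simp add: N_def field_simps)
  then have "1 \<le> R" by (simp add: R_def)
  have "hellinger2 (push K P) (push K Q) \<le> (2 - 4 / (sqrt R + 1)) * TV (push K P) (push K Q)"
    using Mset_is_kernel[OF assms(5)] Qset_nonneg[OF assms(6)] Qset_nonneg[OF assms(7)] assms(2)
      Mset_push_le_ratio[OF assms(5,2,6,7)] Mset_push_le_ratio[OF assms(5,2,7,6)] \<open>1 \<le> R\<close>
    by (intro hellinger2_le_TV push_nonneg) (simp_all add: R_def N_def)
  also have "\<dots> \<le> (2 - 4 / (sqrt R + 1)) * (Xi eps c N * \<delta>)"
  proof (rule mult_left_mono)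
    have "TV (push K P) (push K Q) \<le> Xi eps c N * TV P Q"
      unfolding N_def using assms(5,2) Nc[unfolded N_def] assms(6,7) by (rule Mset_TV_push_le)
    also have "\<dots> \<le> Xi eps c N * \<delta>"
      using assms(8) Xi_nonneg[OF assms(4) Nc] by (rule mult_left_mono)
    finally show "TV (push K P) (push K Q) \<le> Xi eps c N * \<delta>" .
    have "4 / (sqrt R + 1) \<le> 4 / 2"
      using real_sqrt_ge_one[OF \<open>1 \<le> R\<close>] by (intro divide_left_mono mult_pos_pos) linarith+
    then show "0 \<le> 2 - 4 / (sqrt R + 1)" by simp
  qed
  finally show ?thesis by (simp only: R_def N_def mult.assoc mult.left_commute)
qed

end
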